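(* Let $B$ be a Lie algebra over a field $k$ satisfying $\Phi1$: $\forall x_1,\dots,x_4\ (x_1x_2)(x_3x_4)=0$, $\Phi2$: $\forall x,y\ (xyx=0\wedge xyy=0\to xy=0)$ and $\Phi3$: $\forall x,y,z\ (x\ne0\wedge xy=0\wedge xz=0\to yz=0)$. Let $a\in B\setminus\mathrm{Fit}(B)$. Then $ab\ne0$ for every nonzero $b\in\mathrm{Fit}(B)$.
   Context: Products are left-normed: $xyx=(xy)x$. $\mathrm{Fit}(B)$ is the sum of all nilpotent ideals of $B$. *)

theory Defs
  imports Main "HOL.Vector_Spaces"
begin

text \<open>A Lie algebra over a field: a vector space (given by its scalar multiplication)
  with a bilinear, alternating bracket satisfying the Jacobi identity.
  The whole type 'b is the carrier B.\<close>

definition lie_algebra :: "('k::field \<Rightarrow> 'b::ab_group_add \<Rightarrow> 'b) \<Rightarrow> ('b \<Rightarrow> 'b \<Rightarrow> 'b) \<Rightarrow> bool" where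
  "lie_algebra scale br \<longleftrightarrow>
     vector_space scale \<and>
     (\<forall>x y z. br (x + y) z = br x z + br y z) \<and>
     (\<forall>x y z. br x (y + z) = br x y + br x z) \<and>
     (\<forall>c x y. br (scale c x) y = scale c (br x y)) \<and>
     (\<forall>c x y. br x (scale c y) = scale c (br x y)) \<and>
     (\<forall>x. br x x = 0) \<and>
     (\<forall>x y z. br x (br y z) + br y (br z x) + br z (br x y) = 0)"

definition lie_ideal :: "('k::field \<Rightarrow> 'b::ab_group_add \<Rightarrow> 'b) \<Rightarrow> ('b \<Rightarrow> 'b \<Rightarrow> 'b) \<Rightarrow> 'b set \<Rightarrow> bool" where
  "lie_ideal scale br I \<longleftrightarrow> module.subspace scale I \<and>
     (\<forall>x\<in>I. \<forall>y. br x y \<in> I \<and> br y x \<in> I)"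

text \<open>Lower central series of a subalgebra I: I^1 = I, I^(n+1) = span [I^n, I]
  (index shifted: lcs I 0 = I).\<close>
fun lcs :: "('k::field \<Rightarrow> 'b::ab_group_add \<Rightarrow> 'b) \<Rightarrow> ('b \<Rightarrow> 'b \<Rightarrow> 'b) \<Rightarrow> 'b set \<Rightarrow> nat \<Rightarrow> 'b set" where
  "lcs scale br I 0 = I"
| "lcs scale br I (Suc n) = module.span scale {br x y | x y. x \<in> lcs scale br I n \<and> y \<in> I}"

definition nilpotent_ideal :: "('k::field \<Rightarrow> 'b::ab_group_add \<Rightarrow> 'b) \<Rightarrow> ('b \<Rightarrow> 'b \<Rightarrow> 'b) \<Rightarrow> 'b set \<Rightarrow> bool" where
  "nilpotent_ideal scale br I \<longleftrightarrow> lie_ideal scale br I \<and> (\<exists>n. lcs scale br I n = {0})"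

text \<open>Fitting radical: the sum of all nilpotent ideals, i.e. the span of their union.\<close>
definition Fit :: "('k::field \<Rightarrow> 'b::ab_group_add \<Rightarrow> 'b) \<Rightarrow> ('b \<Rightarrow> 'b \<Rightarrow> 'b) \<Rightarrow> 'b set" where
  "Fit scale br = module.span scale (\<Union>{I. nilpotent_ideal scale br I})"

end

theory Submission
  imports Defs
begin

text \<open>Under \<open>\<Phi>1\<close> and \<open>\<Phi>2\<close> the Fitting radical is exactly the centralizer \<open>C\<close> of the
  set of all brackets \<open>yz\<close>. An element of a nilpotent ideal is Engel, and \<open>\<Phi>2\<close> lets the
  vanishing of \<open>(yz)x\<^sup>n\<close> descend to \<open>(yz)x = 0\<close>; conversely \<open>\<Phi>1\<close> makes \<open>C\<close> an ideal
  with \<open>[[C,C],C] = 0\<close>. Now if \<open>ab = 0\<close> with \<open>0 \<noteq> b \<in> C\<close>, then \<open>\<Phi>3\<close> applied to \<open>b\<close>, \<open>a\<close> and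
  any bracket gives \<open>a \<in> C\<close>.\<close>

definition lie_centralizer :: "('b::zero \<Rightarrow> 'b \<Rightarrow> 'b) \<Rightarrow> 'b set \<Rightarrow> 'b set" where
  "lie_centralizer br S = {x. \<forall>s\<in>S. br x s = 0}"

abbreviation brackets :: "('b \<Rightarrow> 'b \<Rightarrow> 'b) \<Rightarrow> 'b set" where
  "brackets br \<equiv> {br y z | y z. True}"

lemma lie_algebra_vector_space: "lie_algebra scale br \<Longrightarrow> vector_space scale"
  by (simp add: lie_algebra_def)

lemma lie_algebra_bracket_add:
  assumes "lie_algebra scale br"
  shows "br (x + y) z = br x z + br y z" "br x (y + z) = br x y + br x z"
  using assms by (simp_all add: lie_algebra_def)

lemma lie_algebra_bracket_zero:
  assumes lie: "lie_algebra scale br"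
  shows "br 0 y = 0" "br y 0 = 0"
proof -
  have "br (0 + 0) y = br 0 y + br 0 y" "br y (0 + 0) = br y 0 + br y 0"
    by (rule lie_algebra_bracket_add[OF lie])+
  then show "br 0 y = 0" "br y 0 = 0" by simp_all
qed

lemma lie_algebra_antisym:
  assumes lie: "lie_algebra scale br"
  shows "br x y = - br y x"
proof -
  have "br (x + y) (x + y) = br x x + br x y + (br y x + br y y)"
    by (simp add: lie_algebra_bracket_add[OF lie])
  then have "br x y + br y x = 0" using lie by (simp add: lie_algebra_def)
  then show ?thesis by (simp add: eq_neg_iff_add_eq_0)
qed

lemma lie_algebra_bracket_eq_0_commute:
  "lie_algebra scale br \<Longrightarrow> br x y = 0 \<longleftrightarrow> br y x = 0"
  using lie_algebra_antisym by (metis neg_equal_0_iff_equal)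

lemma subspace_lie_centralizer:
  assumes lie: "lie_algebra scale br"
  shows "module.subspace scale (lie_centralizer br S)"
proof -
  interpret vector_space scale using lie by (rule lie_algebra_vector_space)
  show ?thesis
    using lie lie_algebra_bracket_zero[OF lie]
    unfolding subspace_def lie_centralizer_def lie_algebra_def by auto
qed

lemma lie_centralizer_span:
  assumes lie: "lie_algebra scale br"
    and x: "x \<in> lie_centralizer br S" and p: "p \<in> module.span scale S"
  shows "br x p = 0"
proof -
  interpret vector_space scale using lie by (rule lie_algebra_vector_space)
  have "module.subspace scale {p. br x p = 0}"
    using lie lie_algebra_bracket_zero[OF lie] unfolding subspace_def lie_algebra_def by auto
  moreover have "S \<subseteq> {p. br x p = 0}" using x by (auto simp: lie_centralizer_def)
  ultimately show ?thesis using span_minimal p by blast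
qed

lemma lcs_right_iterate:
  assumes lie: "lie_algebra scale br" and x: "x \<in> I" and u: "u \<in> I"
  shows "((\<lambda>v. br v x) ^^ k) u \<in> lcs scale br I k"
proof (induction k)
  case 0
  then show ?case using u by simp
next
  case (Suc k)
  interpret vector_space scale using lie by (rule lie_algebra_vector_space)
  show ?case using Suc x by (auto intro: span_base)
qed

text \<open>The downward induction: each step applies \<open>\<Phi>2\<close> to the bracket \<open>w = (yz)x\<^sup>j\<close> and \<open>x\<close>,
  where \<open>(wx)w = 0\<close> holds by \<open>\<Phi>1\<close> because both \<open>wx\<close> and \<open>w\<close> are brackets.\<close>
lemma bracket_right_iterate_eq_0:
  assumes Phi1: "\<forall>x1 x2 x3 x4. br (br x1 x2) (br x3 x4) = 0"
    and Phi2: "\<forall>x y. br (br x y) x = 0 \<and> br (br x y) y = 0 \<longrightarrow> br x y = 0"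
    and "((\<lambda>v. br v x) ^^ Suc n) (br y z) = 0"
  shows "br (br y z) x = 0"
  using assms(3)
proof (induction n arbitrary: y z)
  case 0
  then show ?case by simp
next
  case (Suc n)
  let ?w = "br y z"
  have "((\<lambda>v. br v x) ^^ Suc n) (br ?w x) = 0"
    using Suc.prems by (simp only: funpow_Suc_right comp_def)
  then have "br (br ?w x) x = 0" by (rule Suc.IH)
  moreover have "br (br ?w x) ?w = 0" using Phi1 by blast
  ultimately show ?case using Phi2 by blast
qed

lemma nilpotent_ideal_subset_lie_centralizer:
  assumes lie: "lie_algebra scale br"
    and Phi1: "\<forall>x1 x2 x3 x4. br (br x1 x2) (br x3 x4) = 0"
    and Phi2: "\<forall>x y. br (br x y) x = 0 \<and> br (br x y) y = 0 \<longrightarrow> br x y = 0"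
    and I: "nilpotent_ideal scale br I"
  shows "I \<subseteq> lie_centralizer br (brackets br)"
proof
  fix x assume x: "x \<in> I"
  obtain n where n: "lcs scale br I n = {0}" using I unfolding nilpotent_ideal_def by auto
  have "br (br y z) x = 0" for y z
  proof -
    have "br (br y z) x \<in> I" using I x unfolding nilpotent_ideal_def lie_ideal_def by blast
    then have "((\<lambda>v. br v x) ^^ n) (br (br y z) x) = 0"
      using lcs_right_iterate[OF lie x] n by blast
    then show ?thesis
      by (intro bracket_right_iterate_eq_0[OF Phi1 Phi2]) (simp only: funpow_Suc_right comp_def)
  qed
  then show "x \<in> lie_centralizer br (brackets br)"
    using lie_algebra_bracket_eq_0_commute[OF lie] by (auto simp: lie_centralizer_def)
qed

lemma Fit_subset_lie_centralizer:
  assumes lie: "lie_algebra scale br"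
    and Phi1: "\<forall>x1 x2 x3 x4. br (br x1 x2) (br x3 x4) = 0"
    and Phi2: "\<forall>x y. br (br x y) x = 0 \<and> br (br x y) y = 0 \<longrightarrow> br x y = 0"
  shows "Fit scale br \<subseteq> lie_centralizer br (brackets br)"
proof -
  interpret vector_space scale using lie by (rule lie_algebra_vector_space)
  show ?thesis
    unfolding Fit_def
    using nilpotent_ideal_subset_lie_centralizer[OF lie Phi1 Phi2] subspace_lie_centralizer[OF lie]
    by (intro span_minimal) auto
qed

lemma nilpotent_ideal_lie_centralizer:
  assumes lie: "lie_algebra scale br"
    and Phi1: "\<forall>x1 x2 x3 x4. br (br x1 x2) (br x3 x4) = 0"
  shows "nilpotent_ideal scale br (lie_centralizer br (brackets br))"
proof -
  interpret vector_space scale using lie by (rule lie_algebra_vector_space)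
  let ?C = "lie_centralizer br (brackets br)"
  have "lie_ideal scale br ?C"
    using subspace_lie_centralizer[OF lie] Phi1
    unfolding lie_ideal_def lie_centralizer_def by blast
  moreover have "lcs scale br ?C 2 = {0}"
  proof -
    have "lcs scale br ?C 1 \<subseteq> span (brackets br)" by (auto intro!: span_mono)
    then have "br p q = 0" if "p \<in> lcs scale br ?C 1" "q \<in> ?C" for p q
      using that lie_centralizer_span[OF lie] lie_algebra_bracket_eq_0_commute[OF lie] by blast
    then have "{br p q | p q. p \<in> lcs scale br ?C 1 \<and> q \<in> ?C} \<subseteq> {0}" by blast
    then have "lcs scale br ?C 2 \<subseteq> {0}"
      using span_minimal[of _ "{0}"] by (simp add: numeral_2_eq_2)
    then show ?thesis by (auto simp: numeral_2_eq_2 span_zero)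
  qed
  ultimately show ?thesis unfolding nilpotent_ideal_def by blast
qed

lemma Fit_eq_lie_centralizer:
  assumes lie: "lie_algebra scale br"
    and Phi1: "\<forall>x1 x2 x3 x4. br (br x1 x2) (br x3 x4) = 0"
    and Phi2: "\<forall>x y. br (br x y) x = 0 \<and> br (br x y) y = 0 \<longrightarrow> br x y = 0"
  shows "Fit scale br = lie_centralizer br (brackets br)"
proof
  interpret vector_space scale using lie by (rule lie_algebra_vector_space)
  show "lie_centralizer br (brackets br) \<subseteq> Fit scale br"
    using nilpotent_ideal_lie_centralizer[OF lie Phi1] unfolding Fit_def by (blast intro: span_base)
qed (rule Fit_subset_lie_centralizer[OF lie Phi1 Phi2])

theorem lemma3p2:
  fixes scale :: "'k::field \<Rightarrow> 'b::ab_group_add \<Rightarrow> 'b"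
    and br :: "'b \<Rightarrow> 'b \<Rightarrow> 'b"
    and a :: 'b
  assumes lie: "lie_algebra scale br"
    and Phi1: "\<forall>x1 x2 x3 x4. br (br x1 x2) (br x3 x4) = 0"
    and Phi2: "\<forall>x y. br (br x y) x = 0 \<and> br (br x y) y = 0 \<longrightarrow> br x y = 0"
    and Phi3: "\<forall>x y z. x \<noteq> 0 \<and> br x y = 0 \<and> br x z = 0 \<longrightarrow> br y z = 0"
    and a: "a \<notin> Fit scale br"
  shows "\<forall>b\<in>Fit scale br. b \<noteq> 0 \<longrightarrow> br a b \<noteq> 0"
proof (intro ballI impI notI)
  fix b assume b: "b \<in> Fit scale br" "b \<noteq> 0" and ab: "br a b = 0"
  note Fit_C = Fit_eq_lie_centralizer[OF lie Phi1 Phi2]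
  have "br a s = 0" if "s \<in> brackets br" for s
  proof -
    have "br b s = 0" using b that Fit_C by (auto simp: lie_centralizer_def)
    moreover have "br b a = 0" using ab lie_algebra_bracket_eq_0_commute[OF lie] by blast
    ultimately show ?thesis using Phi3 b(2) by blast
  qed
  then have "a \<in> Fit scale br" using Fit_C by (simp add: lie_centralizer_def)
  then show False using a by contradiction
qed

end
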